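(* Let $d\ge1$ and $k\ge2$ be integers and $\alpha\in[0,1]$. Then \[ \rho(A_\alpha(B(d,k)))\le\alpha(d+1)+2(1-\alpha)\sqrt d\cos\left(\frac{\pi}{k+1}\right) \] and \[ \rho(A_\alpha(B(d,k)))>\alpha(d+1)+2(1-\alpha)\sqrt d\cos\left(\frac{\pi}{k}\right)-\frac{20\alpha\sqrt d}{k^3}. \]
   Context: For a graph $G$, $A(G)$ is the adjacency matrix, $D(G)$ the diagonal degree matrix, and $A_\alpha(G)=\alpha D(G)+(1-\alpha)A(G)$; $\rho(M)$ is the largest eigenvalue of a real symmetric nonnegative matrix $M$. In a rooted tree the level of a vertex is its distance to the root plus one. The Bethe tree $B(d,k)$ is the rooted tree with $k$ levels in which the root has degree $d$, every vertex at level $j$ with $2\le j\le k-1$ has degree $d+1$, and every vertex at level $k$ has degree $1$. *)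

theory Defs
  imports Complex_Main
begin

text \<open>A finite simple graph is given by a finite vertex set V and a symmetric irreflexive
adjacency relation E. Matrices indexed by V are functions V \<Rightarrow> V \<Rightarrow> real.\<close>

definition deg :: "'a set \<Rightarrow> ('a \<Rightarrow> 'a \<Rightarrow> bool) \<Rightarrow> 'a \<Rightarrow> nat" where
  "deg V E x = card {y \<in> V. E x y}"

definition adj_mat :: "('a \<Rightarrow> 'a \<Rightarrow> bool) \<Rightarrow> 'a \<Rightarrow> 'a \<Rightarrow> real" where
  "adj_mat E x y = (if E x y then 1 else 0)"

definition deg_mat :: "'a set \<Rightarrow> ('a \<Rightarrow> 'a \<Rightarrow> bool) \<Rightarrow> 'a \<Rightarrow> 'a \<Rightarrow> real" where
  "deg_mat V E x y = (if x = y then real (deg V E x) else 0)"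

definition A_alpha :: "real \<Rightarrow> 'a set \<Rightarrow> ('a \<Rightarrow> 'a \<Rightarrow> bool) \<Rightarrow> 'a \<Rightarrow> 'a \<Rightarrow> real" where
  "A_alpha \<alpha> V E x y = \<alpha> * deg_mat V E x y + (1 - \<alpha>) * adj_mat E x y"

definition is_eigenvalue :: "'a set \<Rightarrow> ('a \<Rightarrow> 'a \<Rightarrow> real) \<Rightarrow> real \<Rightarrow> bool" where
  "is_eigenvalue V M \<mu> \<longleftrightarrow>
     (\<exists>v :: 'a \<Rightarrow> real. (\<exists>x\<in>V. v x \<noteq> 0) \<and>
        (\<forall>x\<in>V. (\<Sum>y\<in>V. M x y * v y) = \<mu> * v x))"

definition largest_eigenvalue :: "'a set \<Rightarrow> ('a \<Rightarrow> 'a \<Rightarrow> real) \<Rightarrow> real" where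
  "largest_eigenvalue V M = Max {\<mu>. is_eigenvalue V M \<mu>}"

text \<open>Bethe tree B(d,k): vertices are words over {0..<d} of length < k (the empty word is
the root; a word of length j-1 is a vertex at level j); a vertex is adjacent to its
one-letter extensions and to its parent.\<close>

definition bethe_verts :: "nat \<Rightarrow> nat \<Rightarrow> nat list set" where
  "bethe_verts d k = {xs. length xs < k \<and> (\<forall>i\<in>set xs. i < d)}"

definition bethe_adj :: "nat \<Rightarrow> nat \<Rightarrow> nat list \<Rightarrow> nat list \<Rightarrow> bool" where
  "bethe_adj d k xs ys \<longleftrightarrow> xs \<in> bethe_verts d k \<and> ys \<in> bethe_verts d k \<and>
     ((\<exists>i<d. ys = xs @ [i]) \<or> (\<exists>i<d. xs = ys @ [i]))"

end

theory Submission
  imports Defs "HOL-Analysis.Complex_Transcendental" "Jordan_Normal_Form.Char_Poly"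
begin

text \<open>Vectors that are constant on each level of B(d,k) and scaled by sqrt(d)^(-level) are
mapped by A_alpha to vectors of the same kind; on them A_alpha acts as the k x k symmetric
tridiagonal matrix T with diagonal alpha * deg(level) and off-diagonal (1 - alpha) sqrt(d).

Upper bound: the positive vector s_i = sin ((i + 1) pi / (k + 1)) satisfies
T s <= (alpha (d + 1) + 2 (1 - alpha) sqrt(d) cos (pi / (k + 1))) s, and a nonnegative matrix
has no real eigenvalue above such a bound (compare an eigenvector with the positive vector where
their ratio is maximal).

Lower bound: at t_i = sin ((i + 1) pi / k) the Rayleigh quotient of T equals
alpha (d + 1) + 2 (1 - alpha) sqrt(d) cos (pi / k) - 2 alpha sin(pi / k)^2 / k. The leading
principal minors of nu - T form a Sturm sequence, and an LDL^T factorization shows that nu - T is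
positive definite beyond the largest root of det (nu - T); so that root is an eigenvalue no smaller
than the Rayleigh quotient. Finally sin(pi / k)^2 <= pi^2 / k^2 < 10 / k^2. The cases alpha = 0 and
alpha = 1, where this argument degenerates, are settled by explicit eigenvectors.\<close>

section \<open>Eigenvalues of matrices indexed by a finite set\<close>

lemma finite_eigenvalues:
  fixes V :: "'a set" and M :: "'a \<Rightarrow> 'a \<Rightarrow> real"
  assumes fin: "finite V"
  shows "finite {\<mu>. is_eigenvalue V M \<mu>}"
proof -
  obtain f where f: "bij_betw f {0..<card V} V" using ex_bij_betw_nat_finite[OF fin] by blast
  define n where "n = card V"
  define A where "A = mat n n (\<lambda>(i,j). M (f i) (f j))"
  have A: "A \<in> carrier_mat n n" unfolding A_def by auto
  have sub: "{\<mu>. is_eigenvalue V M \<mu>} \<subseteq> {\<mu>. poly (char_poly A) \<mu> = 0}"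
  proof
    fix \<mu> assume "\<mu> \<in> {\<mu>. is_eigenvalue V M \<mu>}"
    then obtain v where v0: "\<exists>x\<in>V. v x \<noteq> 0" and ev: "\<forall>x\<in>V. (\<Sum>y\<in>V. M x y * v y) = \<mu> * v x"
      unfolding is_eigenvalue_def by auto
    define u where "u = vec n (\<lambda>i. v (f i))"
    have "eigenvector A u \<mu>"
      unfolding eigenvector_def
    proof (intro conjI)
      show "u \<in> carrier_vec (dim_row A)" using A unfolding u_def by auto
      show "u \<noteq> 0\<^sub>v (dim_row A)"
      proof
        assume h: "u = 0\<^sub>v (dim_row A)"
        from v0 obtain x where x: "x \<in> V" "v x \<noteq> 0" by auto
        then obtain i where i: "i < n" "f i = x"
          using f unfolding n_def bij_betw_def by (metis atLeastLessThan_iff imageE)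
        have "vec_index u i = 0" using h i A by auto
        thus False using i x unfolding u_def by auto
      qed
      show "A *\<^sub>v u = \<mu> \<cdot>\<^sub>v u"
      proof (rule eq_vecI)
        fix i assume "i < dim_vec (\<mu> \<cdot>\<^sub>v u)"
        hence i: "i < n" unfolding u_def by auto
        have fi: "f i \<in> V" using f i unfolding n_def bij_betw_def by auto
        have "vec_index (A *\<^sub>v u) i = (\<Sum>j\<in>{0..<n}. M (f i) (f j) * v (f j))"
          using i A unfolding A_def u_def by (simp add: scalar_prod_def)
        also have "\<dots> = (\<Sum>y\<in>V. M (f i) y * v y)"
          using sum.reindex_bij_betw[OF f, of "\<lambda>y. M (f i) y * v y"] unfolding n_def by simp
        also have "\<dots> = \<mu> * v (f i)" using ev fi by auto
        finally show "vec_index (A *\<^sub>v u) i = vec_index (\<mu> \<cdot>\<^sub>v u) i" using i unfolding u_def by simp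
      qed (use A in \<open>simp add: u_def\<close>)
    qed
    thus "\<mu> \<in> {\<mu>. poly (char_poly A) \<mu> = 0}"
      using eigenvalue_root_char_poly[OF A] unfolding eigenvalue_def by auto
  qed
  have "char_poly A \<noteq> 0" using degree_monic_char_poly[OF A] by (metis coeff_0 zero_neq_one)
  hence "finite {\<mu>. poly (char_poly A) \<mu> = 0}" by (rule poly_roots_finite)
  with sub show ?thesis by (rule finite_subset)
qed

lemma eigenvalue_le_of_pos_supersolution:
  fixes V :: "'a set" and M :: "'a \<Rightarrow> 'a \<Rightarrow> real"
  assumes fin: "finite V" and nn: "\<forall>x\<in>V. \<forall>y\<in>V. M x y \<ge> 0" and wpos: "\<forall>x\<in>V. w x > 0"
    and sup: "\<forall>x\<in>V. (\<Sum>y\<in>V. M x y * w y) \<le> c * w x"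
    and ev: "is_eigenvalue V M \<mu>"
  shows "\<mu> \<le> c"
proof -
  obtain v where v0: "\<exists>x\<in>V. v x \<noteq> 0" and eq: "\<forall>x\<in>V. (\<Sum>y\<in>V. M x y * v y) = \<mu> * v x"
    using ev unfolding is_eigenvalue_def by auto
  define g where "g x = \<bar>v x\<bar> / w x" for x
  have "Max (g ` V) \<in> g ` V" using fin v0 by (intro Max_in) auto
  then obtain x0 where x0: "x0 \<in> V" "g x0 = Max (g ` V)" by auto
  define m where "m = g x0"
  have bnd: "\<bar>v y\<bar> \<le> m * w y" if "y \<in> V" for y
  proof -
    have "g y \<le> m" using x0 fin that unfolding m_def by auto
    thus ?thesis using wpos that unfolding g_def by (simp add: divide_le_eq)
  qed
  from v0 obtain x1 where x1: "x1 \<in> V" "v x1 \<noteq> 0" by auto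
  have "0 < \<bar>v x1\<bar>" using x1 by simp
  also have "\<bar>v x1\<bar> \<le> m * w x1" using bnd x1 by simp
  finally have "0 < m * w x1" .
  moreover have "w x1 > 0" using wpos x1 by simp
  ultimately have mpos: "m > 0" by (simp add: zero_less_mult_iff)
  have vx0: "\<bar>v x0\<bar> = m * w x0" unfolding m_def g_def using wpos x0 by auto
  have "\<bar>\<mu>\<bar> * \<bar>v x0\<bar> = \<bar>\<Sum>y\<in>V. M x0 y * v y\<bar>" using eq x0 by (simp add: abs_mult)
  also have "\<dots> \<le> (\<Sum>y\<in>V. \<bar>M x0 y\<bar> * \<bar>v y\<bar>)" using sum_abs[of "\<lambda>y. M x0 y * v y" V] by (simp add: abs_mult)
  also have "\<dots> \<le> (\<Sum>y\<in>V. M x0 y * (m * w y))"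
    using bnd nn x0 by (intro sum_mono mult_mono) auto
  also have "\<dots> = m * (\<Sum>y\<in>V. M x0 y * w y)" by (simp add: sum_distrib_left algebra_simps)
  also have "\<dots> \<le> m * (c * w x0)" using sup x0 mpos by (intro mult_left_mono) auto
  also have "\<dots> = c * \<bar>v x0\<bar>" using vx0 by simp
  finally have "\<bar>\<mu>\<bar> * \<bar>v x0\<bar> \<le> c * \<bar>v x0\<bar>" .
  moreover have "\<bar>v x0\<bar> > 0" using vx0 mpos wpos x0 by simp
  ultimately show ?thesis by simp
qed

lemma largest_eigenvalue_bounds:
  fixes V :: "'a set" and M :: "'a \<Rightarrow> 'a \<Rightarrow> real"
  assumes "finite V" and "\<And>\<mu>. is_eigenvalue V M \<mu> \<Longrightarrow> \<mu> \<le> u"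
    and "is_eigenvalue V M \<theta>" and "l < \<theta>"
  shows "largest_eigenvalue V M \<le> u \<and> l < largest_eigenvalue V M"
proof -
  let ?E = "{\<mu>. is_eigenvalue V M \<mu>}"
  have fin: "finite ?E" and \<theta>: "\<theta> \<in> ?E" using finite_eigenvalues assms by auto
  have ne: "?E \<noteq> {}" using \<theta> by blast
  have "Max ?E \<in> ?E" by (rule Max_in[OF fin ne])
  moreover have "\<theta> \<le> Max ?E" by (rule Max_ge[OF fin \<theta>])
  ultimately show ?thesis
    using assms(2)[of "Max ?E"] \<open>l < \<theta>\<close> unfolding largest_eigenvalue_def by simp
qed

section \<open>Symmetric tridiagonal matrices with constant off-diagonal\<close>

definition tridiag_apply :: "(nat \<Rightarrow> real) \<Rightarrow> real \<Rightarrow> nat \<Rightarrow> (nat \<Rightarrow> real) \<Rightarrow> nat \<Rightarrow> real" where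
  "tridiag_apply a b n t i =
     a i * t i + b * ((if Suc i < n then t (Suc i) else 0) + (if 0 < i then t (i - 1) else 0))"

text \<open>If T is the symmetric tridiagonal matrix with diagonal a and off-diagonal b, then
tridiag_seq a b (j + 1) nu = det (nu - T_j) / b^j for its leading j x j block T_j. The vector
(tridiag_seq a b (i + 1) nu)_i satisfies the first n - 1 rows of T t = nu t for the n x n matrix,
and the last row exactly when tridiag_seq a b (n + 1) nu = 0.\<close>

fun tridiag_seq :: "(nat \<Rightarrow> real) \<Rightarrow> real \<Rightarrow> nat \<Rightarrow> real \<Rightarrow> real" where
  "tridiag_seq a b 0 \<nu> = 0"
| "tridiag_seq a b (Suc 0) \<nu> = 1"
| "tridiag_seq a b (Suc (Suc i)) \<nu> = ((\<nu> - a i) * tridiag_seq a b (Suc i) \<nu> - b * tridiag_seq a b i \<nu>) / b"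

declare tridiag_seq.simps(3) [simp del]

lemma tridiag_seq_Suc_Suc:
  assumes "b \<noteq> 0"
  shows "b * tridiag_seq a b (Suc (Suc i)) \<nu> = (\<nu> - a i) * tridiag_seq a b (Suc i) \<nu> - b * tridiag_seq a b i \<nu>"
  using assms by (simp add: tridiag_seq.simps(3))

lemma tridiag_seq_is_poly: "\<exists>p. tridiag_seq a b j = poly p"
proof -
  have "\<exists>p q. tridiag_seq a b j = poly p \<and> tridiag_seq a b (Suc j) = poly q"
  proof (induction j)
    case 0
    show ?case by (intro exI[of _ 0] exI[of _ 1]) auto
  next
    case (Suc j)
    then obtain p q where "tridiag_seq a b j = poly p" "tridiag_seq a b (Suc j) = poly q" by blast
    thus ?case
      by (intro exI[of _ q] exI[of _ "Polynomial.smult (1/b) ([:- a j, 1:] * q - Polynomial.smult b p)"])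
         (auto simp: fun_eq_iff divide_inverse algebra_simps tridiag_seq.simps(3))
  qed
  thus ?thesis by blast
qed

lemma tridiag_seq_ge_one_beyond_diag:
  assumes b: "b > 0" and large: "\<forall>i<j. a i + 2 * b \<le> \<nu>"
  shows "tridiag_seq a b j \<nu> \<le> tridiag_seq a b (Suc j) \<nu> \<and> 1 \<le> tridiag_seq a b (Suc j) \<nu>"
  using large
proof (induction j)
  case 0 then show ?case by simp
next
  case (Suc j)
  hence IH: "tridiag_seq a b j \<nu> \<le> tridiag_seq a b (Suc j) \<nu>" "1 \<le> tridiag_seq a b (Suc j) \<nu>" by auto
  have "2 * b \<le> \<nu> - a j" using Suc.prems by auto
  hence "2 * b * tridiag_seq a b (Suc j) \<nu> \<le> (\<nu> - a j) * tridiag_seq a b (Suc j) \<nu>"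
    using IH(2) by (intro mult_right_mono) auto
  moreover have "b * tridiag_seq a b j \<nu> \<le> b * tridiag_seq a b (Suc j) \<nu>"
    using IH(1) b by (intro mult_left_mono) auto
  moreover have "b * tridiag_seq a b (Suc (Suc j)) \<nu>
      = (\<nu> - a j) * tridiag_seq a b (Suc j) \<nu> - b * tridiag_seq a b j \<nu>"
    using b by (intro tridiag_seq_Suc_Suc) simp
  ultimately have "b * tridiag_seq a b (Suc j) \<nu> \<le> b * tridiag_seq a b (Suc (Suc j)) \<nu>" by linarith
  hence "tridiag_seq a b (Suc j) \<nu> \<le> tridiag_seq a b (Suc (Suc j)) \<nu>"
    using b by (simp only: mult_le_cancel_left_pos)
  thus ?case using IH by linarith
qed

lemma tridiag_seq_eventually_ge_one:
  assumes "b > 0"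
  shows "\<exists>K. \<forall>\<nu>\<ge>K. 1 \<le> tridiag_seq a b (Suc j) \<nu>"
proof (intro exI allI impI)
  fix \<nu> assume \<nu>: "(\<Sum>i<j. \<bar>a i\<bar>) + 2 * b \<le> \<nu>"
  have "\<forall>i<j. a i + 2 * b \<le> \<nu>"
  proof (intro allI impI)
    fix i assume "i < j"
    hence "\<bar>a i\<bar> \<le> (\<Sum>i<j. \<bar>a i\<bar>)" by (intro member_le_sum) auto
    thus "a i + 2 * b \<le> \<nu>" using \<nu> by linarith
  qed
  thus "1 \<le> tridiag_seq a b (Suc j) \<nu>" using tridiag_seq_ge_one_beyond_diag[OF assms] by blast
qed

lemma poly_largest_root_above:
  fixes P :: "real poly"
  assumes neg: "poly P x0 < 0" and pos: "\<forall>x\<ge>K. poly P x > 0"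
  shows "\<exists>\<theta>>x0. poly P \<theta> = 0 \<and> (\<forall>x>\<theta>. poly P x > 0)"
proof -
  let ?R = "{z. poly P z = 0 \<and> x0 \<le> z}"
  have "P \<noteq> 0" using pos by (metis order_refl less_irrefl poly_0)
  hence "finite {z. poly P z = 0}" by (rule poly_roots_finite)
  hence fin: "finite ?R" by (rule rev_finite_subset) auto
  have root_after: "\<exists>z\<ge>x. poly P z = 0" if "poly P x \<le> 0" for x
  proof -
    have "poly P x \<le> 0" "0 \<le> poly P (max K x)" "x \<le> max K x"
      using that pos by (auto simp: less_imp_le)
    moreover have "continuous_on {x..max K x} (poly P)"
      using continuous_on_poly[OF continuous_on_id] by simp
    ultimately show ?thesis using IVT'[of "poly P" x 0 "max K x"] by auto
  qed
  define \<theta> where "\<theta> = Max ?R"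
  have "?R \<noteq> {}" using root_after[of x0] neg by auto
  hence "\<theta> \<in> ?R" unfolding \<theta>_def using fin by (intro Max_in)
  hence root: "poly P \<theta> = 0" and gt: "x0 < \<theta>" using neg by (auto simp: order.order_iff_strict)
  have "poly P x > 0" if "x > \<theta>" for x
  proof (rule ccontr)
    assume "\<not> poly P x > 0"
    then obtain z where "z \<ge> x" "poly P z = 0" using root_after[of x] by auto
    hence "z \<le> \<theta>" unfolding \<theta>_def using fin that gt by (intro Max_ge) auto
    thus False using \<open>z \<ge> x\<close> that by simp
  qed
  thus ?thesis using root gt by blast
qed

lemma tridiag_seq_largest_root:
  assumes b: "b > 0"
  shows "\<exists>\<theta>. tridiag_seq a b (Suc (Suc j)) \<theta> = 0 \<and> (\<forall>\<nu>>\<theta>. tridiag_seq a b (Suc (Suc j)) \<nu> > 0)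
          \<and> (\<forall>\<nu>\<ge>\<theta>. \<forall>i\<in>{1..Suc j}. tridiag_seq a b i \<nu> > 0)"
proof (induction j)
  case 0
  show ?case using b by (intro exI[of _ "a 0"]) (auto simp: le_Suc_eq tridiag_seq.simps(3))
next
  case (Suc j)
  then obtain \<theta> where root: "tridiag_seq a b (Suc (Suc j)) \<theta> = 0"
    and pos_root: "\<forall>\<nu>>\<theta>. tridiag_seq a b (Suc (Suc j)) \<nu> > 0"
    and pos_below: "\<forall>\<nu>\<ge>\<theta>. \<forall>i\<in>{1..Suc j}. tridiag_seq a b i \<nu> > 0" by blast
  obtain P where P: "tridiag_seq a b (Suc (Suc (Suc j))) = poly P" using tridiag_seq_is_poly by blast
  have "poly P \<theta> = - tridiag_seq a b (Suc j) \<theta>"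
    using root b unfolding P[symmetric] by (simp add: tridiag_seq.simps(3))
  moreover have "tridiag_seq a b (Suc j) \<theta> > 0" using pos_below by auto
  ultimately have "poly P \<theta> < 0" by simp
  moreover obtain K where "\<forall>\<nu>\<ge>K. 1 \<le> poly P \<nu>"
    using tridiag_seq_eventually_ge_one[OF b, of a "Suc (Suc j)"] unfolding P by blast
  ultimately obtain \<theta>' where "\<theta>' > \<theta>" "poly P \<theta>' = 0" "\<forall>\<nu>>\<theta>'. poly P \<nu> > 0"
    using poly_largest_root_above[of P \<theta> K] by force
  moreover have "tridiag_seq a b i \<nu> > 0" if "\<nu> \<ge> \<theta>'" "i \<in> {1..Suc (Suc j)}" for \<nu> i
    using that pos_root pos_below \<open>\<theta>' > \<theta>\<close> by (cases "i = Suc (Suc j)") auto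
  ultimately show ?case unfolding P by blast
qed

definition tridiag_form :: "(nat \<Rightarrow> real) \<Rightarrow> real \<Rightarrow> nat \<Rightarrow> real \<Rightarrow> (nat \<Rightarrow> real) \<Rightarrow> real" where
  "tridiag_form a b n \<nu> t = (\<Sum>i<n. (\<nu> - a i) * t i ^ 2) - 2 * b * (\<Sum>i<n - 1. t i * t (Suc i))"

lemma tridiag_form_LDL:
  assumes b: "b > 0" and nz: "\<forall>i\<le>Suc m. tridiag_seq a b (Suc i) \<nu> \<noteq> 0"
  defines "e \<equiv> \<lambda>i. b * tridiag_seq a b (Suc (Suc i)) \<nu> / tridiag_seq a b (Suc i) \<nu>"
  shows "tridiag_form a b (Suc m) \<nu> t = (\<Sum>i<m. e i * (t i - b / e i * t (Suc i)) ^ 2) + e m * t m ^ 2"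
  using nz unfolding tridiag_form_def
proof (induction m)
  case 0
  have "e 0 = \<nu> - a 0" unfolding e_def using b by (simp add: tridiag_seq.simps(3))
  thus ?case by simp
next
  case (Suc m)
  have IH: "(\<Sum>i<Suc m. (\<nu> - a i) * t i ^ 2) - 2 * b * (\<Sum>i<m. t i * t (Suc i))
       = (\<Sum>i<m. e i * (t i - b / e i * t (Suc i)) ^ 2) + e m * t m ^ 2"
    using Suc by auto
  have nz: "tridiag_seq a b (Suc m) \<nu> \<noteq> 0" "tridiag_seq a b (Suc (Suc m)) \<nu> \<noteq> 0"
    using Suc.prems by auto
  hence em: "e m \<noteq> 0" unfolding e_def using b by simp
  have "b * tridiag_seq a b (Suc (Suc (Suc m))) \<nu>
      = (\<nu> - a (Suc m)) * tridiag_seq a b (Suc (Suc m)) \<nu> - b * tridiag_seq a b (Suc m) \<nu>"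
    using b by (intro tridiag_seq_Suc_Suc) simp
  hence rel: "e (Suc m) = \<nu> - a (Suc m) - b\<^sup>2 / e m"
    unfolding e_def using nz b by (simp add: field_simps power2_eq_square)
  have "e m * t m ^ 2 + (\<nu> - a (Suc m)) * t (Suc m) ^ 2 - 2 * b * (t m * t (Suc m))
     = e m * (t m - b / e m * t (Suc m)) ^ 2 + e (Suc m) * t (Suc m) ^ 2"
    unfolding rel using em by (simp add: field_simps power2_eq_square)
  thus ?case using IH by (simp add: algebra_simps)
qed

lemma zero_of_backward_recurrence:
  assumes "t m = 0" and "\<And>i. i < m \<Longrightarrow> t i = c i * t (Suc i)" and "i \<le> m"
  shows "t i = (0 :: 'a :: mult_zero)"
  using \<open>i \<le> m\<close>
proof (induction i rule: inc_induct)
  case (step i)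
  thus ?case using assms(2)[of i] by simp
qed (rule assms(1))

lemma tridiag_form_pos:
  assumes b: "b > 0" and pos: "\<forall>i\<in>{1..Suc n}. tridiag_seq a b i \<nu> > 0" and t: "\<exists>i<n. t i \<noteq> 0"
  shows "tridiag_form a b n \<nu> t > 0"
proof -
  obtain m where m: "n = Suc m" using t by (cases n) auto
  define e where "e \<equiv> \<lambda>i. b * tridiag_seq a b (Suc (Suc i)) \<nu> / tridiag_seq a b (Suc i) \<nu>"
  have epos: "e i > 0" if "i \<le> m" for i
    unfolding e_def using pos that m b by (intro divide_pos_pos mult_pos_pos) auto
  have LDL: "tridiag_form a b n \<nu> t = (\<Sum>i<m. e i * (t i - b / e i * t (Suc i)) ^ 2) + e m * t m ^ 2"
    unfolding e_def m using tridiag_form_LDL[OF b] pos m by force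
  have terms_nonneg: "0 \<le> e i * (t i - b / e i * t (Suc i)) ^ 2" if "i \<in> {..<m}" for i
    using epos[of i] that by (intro mult_nonneg_nonneg) auto
  show ?thesis
  proof (rule ccontr)
    assume "\<not> ?thesis"
    moreover have "0 \<le> e m * t m ^ 2" using epos[of m] by simp
    moreover have "0 \<le> (\<Sum>i<m. e i * (t i - b / e i * t (Suc i)) ^ 2)"
      using terms_nonneg by (rule sum_nonneg)
    ultimately have "(\<Sum>i<m. e i * (t i - b / e i * t (Suc i)) ^ 2) = 0" and "e m * t m ^ 2 = 0"
      using LDL by linarith+
    hence "\<forall>i<m. e i * (t i - b / e i * t (Suc i)) ^ 2 = 0" and "t m = 0"
      using sum_nonneg_eq_0_iff[OF finite_lessThan terms_nonneg] epos[of m] by auto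
    hence recurrence: "t i = b / e i * t (Suc i)" if "i < m" for i
      using epos[of i] that by auto
    have "t i = 0" if "i < n" for i
      using that m by (intro zero_of_backward_recurrence[OF \<open>t m = 0\<close> recurrence]) auto
    thus False using t by blast
  qed
qed

lemma tridiag_seq_root_ge_of_form_nonpos:
  assumes b: "b > 0" and t: "\<exists>i<n. t i \<noteq> 0" and form: "tridiag_form a b n \<mu> t \<le> 0"
  shows "\<exists>\<theta>\<ge>\<mu>. tridiag_seq a b (Suc n) \<theta> = 0"
proof -
  obtain m where m: "n = Suc m" using t by (cases n) auto
  obtain \<theta> where root: "tridiag_seq a b (Suc n) \<theta> = 0"
    and pos_root: "\<forall>\<nu>>\<theta>. tridiag_seq a b (Suc n) \<nu> > 0"
    and pos_below: "\<forall>\<nu>\<ge>\<theta>. \<forall>i\<in>{1..n}. tridiag_seq a b i \<nu> > 0"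
    using tridiag_seq_largest_root[OF b, of a m] unfolding m by blast
  have "\<theta> \<ge> \<mu>"
  proof (rule ccontr)
    assume "\<not> \<theta> \<ge> \<mu>"
    hence "\<forall>i\<in>{1..Suc n}. tridiag_seq a b i \<mu> > 0"
      using pos_root pos_below by (auto simp: le_Suc_eq)
    hence "tridiag_form a b n \<mu> t > 0" by (rule tridiag_form_pos[OF b _ t])
    thus False using form by simp
  qed
  thus ?thesis using root by blast
qed

lemma tridiag_seq_eigenvector:
  assumes b: "b \<noteq> 0" and root: "tridiag_seq a b (Suc n) \<theta> = 0" and i: "i < n"
  shows "tridiag_apply a b n (\<lambda>j. tridiag_seq a b (Suc j) \<theta>) i = \<theta> * tridiag_seq a b (Suc i) \<theta>"
proof -
  have up: "(if Suc i < n then tridiag_seq a b (Suc (Suc i)) \<theta> else 0) = tridiag_seq a b (Suc (Suc i)) \<theta>"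
  proof (cases "Suc i < n")
    case False
    hence "Suc i = n" using i by simp
    thus ?thesis using root by simp
  qed simp
  have down: "(if 0 < i then tridiag_seq a b (Suc (i - 1)) \<theta> else 0) = tridiag_seq a b i \<theta>"
    by (cases i) auto
  show ?thesis
    unfolding tridiag_apply_def up down using tridiag_seq_Suc_Suc[OF b, where a = a and i = i and \<nu> = \<theta>]
    by (simp add: algebra_simps)
qed

lemma tridiag_apply_sin:
  assumes i: "i < n"
  defines "\<phi> \<equiv> pi / real (Suc n)"
  shows "tridiag_apply a b n (\<lambda>j. sin ((real j + 1) * \<phi>)) i = (a i + 2 * b * cos \<phi>) * sin ((real i + 1) * \<phi>)"
proof -
  have up: "(if Suc i < n then sin ((real (Suc i) + 1) * \<phi>) else 0) = sin ((real i + 2) * \<phi>)"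
  proof (cases "Suc i < n")
    case True thus ?thesis by (simp add: algebra_simps)
  next
    case False
    hence "Suc i = n" using i by simp
    hence "(real i + 2) * \<phi> = pi" unfolding \<phi>_def by (auto simp: field_simps)
    thus ?thesis using False by simp
  qed
  have down: "(if 0 < i then sin ((real (i - 1) + 1) * \<phi>) else 0) = sin (real i * \<phi>)"
    by (cases i) (auto simp: algebra_simps)
  have "sin ((real i + 1) * \<phi>) * cos \<phi> = (sin ((real i + 1) * \<phi> + \<phi>) + sin ((real i + 1) * \<phi> - \<phi>)) / 2"
    by (rule sin_times_cos)
  moreover have "(real i + 1) * \<phi> + \<phi> = (real i + 2) * \<phi>" "(real i + 1) * \<phi> - \<phi> = real i * \<phi>"
    by (simp_all add: algebra_simps)
  ultimately have "sin ((real i + 2) * \<phi>) + sin (real i * \<phi>) = 2 * cos \<phi> * sin ((real i + 1) * \<phi>)"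
    by (simp add: algebra_simps)
  thus ?thesis unfolding tridiag_apply_def up down by (simp add: algebra_simps)
qed

section \<open>Trigonometric sums\<close>

lemma two_sin_mult_sum_cos:
  "2 * sin h * (\<Sum>j<N. cos (x + 2 * real j * h)) = sin (x + (2 * real N - 1) * h) - sin (x - h)"
proof (induction N)
  case 0 thus ?case by simp
next
  case (Suc N)
  have "2 * sin h * cos (x + 2 * real N * h) = sin ((x + 2 * real N * h) + h) - sin ((x + 2 * real N * h) - h)"
    using cos_times_sin[of "x + 2 * real N * h" h] by (simp add: algebra_simps)
  moreover have "x + (2 * real (Suc N) - 1) * h = (x + 2 * real N * h) + h"
    and "x + (2 * real N - 1) * h = (x + 2 * real N * h) - h" by (simp_all add: algebra_simps)
  ultimately show ?case using Suc by (simp add: algebra_simps)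
qed

lemma sum_sin_squared:
  assumes k: "k \<ge> 2"
  shows "(\<Sum>i<k. sin ((real i + 1) * (pi / real k)) ^ 2) = real k / 2"
proof -
  define h where "h = pi / real k"
  have kh: "real k * h = pi" unfolding h_def using k by simp
  have "sin h > 0" unfolding h_def using k by (intro sin_gt_zero) (auto simp: field_simps)
  moreover have "2 * sin h * (\<Sum>j<k. cos (2 * h + 2 * real j * h)) = sin (2 * h + (2 * real k - 1) * h) - sin (2 * h - h)"
    by (rule two_sin_mult_sum_cos)
  moreover have "2 * h + (2 * real k - 1) * h = h + 2 * pi" using kh by (simp add: algebra_simps)
  ultimately have cs: "(\<Sum>j<k. cos (2 * h + 2 * real j * h)) = 0" by (simp add: sin_periodic)
  have "(\<Sum>i<k. sin ((real i + 1) * h) ^ 2) = (\<Sum>i<k. (1 - cos (2 * h + 2 * real i * h)) / 2)"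
  proof (rule sum.cong)
    fix i
    have "cos (2 * ((real i + 1) * h)) = 1 - 2 * sin ((real i + 1) * h) ^ 2" by (rule cos_double_sin)
    moreover have "2 * ((real i + 1) * h) = 2 * h + 2 * real i * h" by (simp add: algebra_simps)
    ultimately show "sin ((real i + 1) * h) ^ 2 = (1 - cos (2 * h + 2 * real i * h)) / 2" by simp
  qed simp
  also have "\<dots> = real k / 2 - (\<Sum>i<k. cos (2 * h + 2 * real i * h)) / 2"
    by (simp add: sum_divide_distrib[symmetric] sum_subtractf)
  finally show ?thesis using cs unfolding h_def by simp
qed

lemma sum_sin_times_sin_Suc:
  assumes k: "k \<ge> 2"
  shows "2 * (\<Sum>i<k - 1. sin ((real i + 1) * (pi / real k)) * sin ((real (Suc i) + 1) * (pi / real k)))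
     = real k * cos (pi / real k)"
proof -
  define h where "h = pi / real k"
  have kh: "real k * h = pi" unfolding h_def using k by simp
  have rk: "real (k - 1) = real k - 1" using k by (simp add: of_nat_diff)
  have sh: "sin h > 0" unfolding h_def using k by (intro sin_gt_zero) (auto simp: field_simps)
  have "2 * sin h * (\<Sum>j<k - 1. cos (3 * h + 2 * real j * h)) = sin (3 * h + (2 * real (k - 1) - 1) * h) - sin (3 * h - h)"
    by (rule two_sin_mult_sum_cos)
  also have "3 * h + (2 * real (k - 1) - 1) * h = 2 * pi" using kh rk by (simp add: algebra_simps)
  also have "3 * h - h = 2 * h" by simp
  finally have "2 * sin h * (\<Sum>j<k - 1. cos (3 * h + 2 * real j * h)) = - (2 * sin h * cos h)"
    by (simp add: sin_double)
  hence "sin h * ((\<Sum>j<k - 1. cos (3 * h + 2 * real j * h)) + cos h) = 0"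
    by (simp add: algebra_simps)
  hence cs: "(\<Sum>j<k - 1. cos (3 * h + 2 * real j * h)) = - cos h" using sh by simp
  have "(\<Sum>i<k - 1. 2 * (sin ((real i + 1) * h) * sin ((real (Suc i) + 1) * h)))
      = (\<Sum>i<k - 1. cos h - cos (3 * h + 2 * real i * h))"
  proof (rule sum.cong)
    fix i
    have "2 * (sin ((real i + 1) * h) * sin ((real (Suc i) + 1) * h))
       = cos ((real i + 1) * h - (real (Suc i) + 1) * h) - cos ((real i + 1) * h + (real (Suc i) + 1) * h)"
      by (simp add: sin_times_sin)
    moreover have "(real i + 1) * h - (real (Suc i) + 1) * h = - h"
      and "(real i + 1) * h + (real (Suc i) + 1) * h = 3 * h + 2 * real i * h" by (simp_all add: algebra_simps)
    ultimately show "2 * (sin ((real i + 1) * h) * sin ((real (Suc i) + 1) * h)) = cos h - cos (3 * h + 2 * real i * h)"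
      by simp
  qed simp
  also have "\<dots> = real k * cos h" using cs rk by (simp add: sum_subtractf algebra_simps)
  finally show ?thesis unfolding h_def by (simp add: sum_distrib_left)
qed

lemma sin_pi_div_squared_lt:
  assumes "k > 0"
  shows "sin (pi / real k) ^ 2 < 10 / real k ^ 2"
proof -
  have "\<bar>sin (pi / real k)\<bar> \<le> \<bar>pi / real k\<bar>" by (rule abs_sin_x_le_abs_x)
  hence "sin (pi / real k) ^ 2 \<le> (pi / real k) ^ 2" by (simp only: abs_le_square_iff)
  also have "\<dots> = pi * pi / real k ^ 2" by (simp add: power_divide power2_eq_square)
  also have "\<dots> < 10 / real k ^ 2"
  proof -
    have "pi * pi \<le> 3.1415926535899 * 3.1415926535899"
      using pi_approx(2) by (intro mult_mono) auto
    thus ?thesis using assms by (intro divide_strict_right_mono) auto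
  qed
  finally show ?thesis .
qed

section \<open>The Bethe tree\<close>

lemma finite_bethe_verts: "finite (bethe_verts d k)"
proof -
  have "bethe_verts d k \<subseteq> {xs. set xs \<subseteq> {..<d} \<and> length xs \<le> k}"
    unfolding bethe_verts_def by auto
  thus ?thesis using finite_lists_length_le[of "{..<d}" k] finite_subset by blast
qed

lemma bethe_neighbours:
  assumes x: "x \<in> bethe_verts d k"
  shows "{y \<in> bethe_verts d k. bethe_adj d k x y}
       = (if Suc (length x) < k then (\<lambda>j. x @ [j]) ` {..<d} else {}) \<union> (if x \<noteq> [] then {butlast x} else {})"
    (is "?L = ?C \<union> ?P")
proof (intro equalityI subsetI)
  fix y assume "y \<in> ?L"
  hence y: "y \<in> bethe_verts d k" "(\<exists>i<d. y = x @ [i]) \<or> (\<exists>i<d. x = y @ [i])"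
    unfolding bethe_adj_def by auto
  show "y \<in> ?C \<union> ?P"
  proof (cases "\<exists>i<d. y = x @ [i]")
    case True
    then obtain i where i: "i < d" "y = x @ [i]" by auto
    hence "Suc (length x) < k" using y(1) unfolding bethe_verts_def by auto
    thus ?thesis using i by auto
  next
    case False
    then obtain i where "x = y @ [i]" using y by auto
    thus ?thesis by auto
  qed
next
  fix y assume y: "y \<in> ?C \<union> ?P"
  show "y \<in> ?L"
  proof (cases "y \<in> ?C")
    case True
    then obtain i where i: "i < d" "y = x @ [i]" "Suc (length x) < k" by (auto split: if_splits)
    hence "y \<in> bethe_verts d k" using x unfolding bethe_verts_def by auto
    thus ?thesis using i x unfolding bethe_adj_def by auto
  next
    case False
    hence xn: "x \<noteq> []" "y = butlast x" using y by (auto split: if_splits)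
    hence xy: "x = y @ [last x]" by simp
    have "last x < d" using x xn unfolding bethe_verts_def by auto
    moreover have "y \<in> bethe_verts d k" using x xn unfolding bethe_verts_def
      by (auto dest: in_set_butlastD)
    ultimately show ?thesis using xy x unfolding bethe_adj_def by blast
  qed
qed

text \<open>Degree of a vertex at depth i, i.e. at level i + 1.\<close>

definition bethe_level_deg :: "nat \<Rightarrow> nat \<Rightarrow> nat \<Rightarrow> real" where
  "bethe_level_deg d k i = (if Suc i < k then real d else 0) + (if 0 < i then 1 else 0)"

lemma A_alpha_bethe_level_fun:
  assumes x: "x \<in> bethe_verts d k"
  shows "(\<Sum>y\<in>bethe_verts d k. A_alpha \<alpha> (bethe_verts d k) (bethe_adj d k) x y * f (length y))
    = \<alpha> * bethe_level_deg d k (length x) * f (length x)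
      + (1 - \<alpha>) * ((if Suc (length x) < k then real d * f (Suc (length x)) else 0)
                  + (if 0 < length x then f (length x - 1) else 0))"
proof -
  let ?V = "bethe_verts d k" and ?E = "bethe_adj d k"
  let ?C = "(if Suc (length x) < k then (\<lambda>j. x @ [j]) ` {..<d} else {})"
  let ?P = "(if x \<noteq> [] then {butlast x} else {})"
  have fin: "finite ?V" by (rule finite_bethe_verts)
  have N: "{y \<in> ?V. ?E x y} = ?C \<union> ?P" by (rule bethe_neighbours[OF x])
  have disj: "?C \<inter> ?P = {}" by (auto dest: arg_cong[of _ _ length])
  have injC: "inj_on (\<lambda>j. x @ [j]) {..<d}" by (auto simp: inj_on_def)
  have "card ?C = (if Suc (length x) < k then d else 0)"
    using card_image[OF injC] by auto
  moreover have "card ?P = (if 0 < length x then 1 else 0)" by auto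
  ultimately have deg: "real (deg ?V ?E x) = bethe_level_deg d k (length x)"
    unfolding deg_def N bethe_level_deg_def using card_Un_disjoint[of ?C ?P] disj by auto
  have "(\<Sum>y\<in>?V. Defs.adj_mat ?E x y * f (length y)) = (\<Sum>y\<in>{y \<in> ?V. ?E x y}. f (length y))"
    unfolding Defs.adj_mat_def by (simp add: sum.inter_filter[OF fin]) (rule sum.cong, auto)
  also have "\<dots> = (\<Sum>y\<in>?C. f (length y)) + (\<Sum>y\<in>?P. f (length y))"
    unfolding N by (rule sum.union_disjoint) (auto dest: arg_cong[of _ _ length])
  also have "\<dots> = (if Suc (length x) < k then real d * f (Suc (length x)) else 0)
      + (if 0 < length x then f (length x - 1) else 0)"
    using sum.reindex[OF injC, of "\<lambda>y. f (length y)"] by auto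
  finally have adj: "(\<Sum>y\<in>?V. Defs.adj_mat ?E x y * f (length y)) = \<dots>" .
  have "(\<Sum>y\<in>?V. deg_mat ?V ?E x y * f (length y)) = (\<Sum>y\<in>?V. if x = y then real (deg ?V ?E x) * f (length y) else 0)"
    unfolding deg_mat_def by (rule sum.cong) auto
  also have "\<dots> = real (deg ?V ?E x) * f (length x)" using x fin by (simp add: sum.delta)
  finally have dm: "(\<Sum>y\<in>?V. deg_mat ?V ?E x y * f (length y)) = \<dots>" .
  have "(\<Sum>y\<in>?V. A_alpha \<alpha> ?V ?E x y * f (length y))
     = \<alpha> * (\<Sum>y\<in>?V. deg_mat ?V ?E x y * f (length y)) + (1 - \<alpha>) * (\<Sum>y\<in>?V. Defs.adj_mat ?E x y * f (length y))"
    unfolding A_alpha_def sum_distrib_left sum.distrib[symmetric] by (rule sum.cong) (auto simp: algebra_simps)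
  thus ?thesis using dm adj deg by simp
qed

lemma A_alpha_bethe_scaled_level_fun:
  assumes x: "x \<in> bethe_verts d k" and d: "d \<ge> 1"
  shows "(\<Sum>y\<in>bethe_verts d k. A_alpha \<alpha> (bethe_verts d k) (bethe_adj d k) x y * (T (length y) / sqrt d ^ length y))
    = tridiag_apply (\<lambda>i. \<alpha> * bethe_level_deg d k i) ((1 - \<alpha>) * sqrt d) k T (length x) / sqrt d ^ length x"
proof -
  let ?i = "length x" and ?s = "sqrt (real d)"
  have s: "?s > 0" using d by simp
  have up: "(if Suc ?i < k then real d * (T (Suc ?i) / ?s ^ Suc ?i) else 0)
        = ?s * (if Suc ?i < k then T (Suc ?i) else 0) / ?s ^ ?i"
    using s by (auto simp: field_simps simp flip: real_sqrt_mult_self[of "real d"])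
  have down: "(if 0 < ?i then T (?i - 1) / ?s ^ (?i - 1) else 0)
        = ?s * (if 0 < ?i then T (?i - 1) else 0) / ?s ^ ?i"
    using s by (cases ?i) (auto simp: field_simps)
  show ?thesis
    unfolding A_alpha_bethe_level_fun[OF x, of \<alpha> "\<lambda>n. T n / ?s ^ n"] up down tridiag_apply_def
    using s by (simp add: field_simps)
qed

lemma bethe_eigenvalue_of_tridiag:
  assumes d: "d \<ge> 1" and nz: "\<exists>i<k. T i \<noteq> 0"
    and eq: "\<And>i. i < k \<Longrightarrow> tridiag_apply (\<lambda>i. \<alpha> * bethe_level_deg d k i) ((1 - \<alpha>) * sqrt d) k T i = \<theta> * T i"
  shows "is_eigenvalue (bethe_verts d k) (A_alpha \<alpha> (bethe_verts d k) (bethe_adj d k)) \<theta>"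
  unfolding is_eigenvalue_def
proof (intro exI conjI ballI)
  let ?v = "\<lambda>xs. T (length xs) / sqrt d ^ length xs"
  from nz obtain i where i: "i < k" "T i \<noteq> 0" by auto
  have "replicate i 0 \<in> bethe_verts d k" using i d unfolding bethe_verts_def by auto
  moreover have "?v (replicate i 0) \<noteq> 0" using i d by simp
  ultimately show "\<exists>x\<in>bethe_verts d k. ?v x \<noteq> 0" by blast
  fix x assume x: "x \<in> bethe_verts d k"
  hence "length x < k" unfolding bethe_verts_def by auto
  thus "(\<Sum>y\<in>bethe_verts d k. A_alpha \<alpha> (bethe_verts d k) (bethe_adj d k) x y * ?v y) = \<theta> * ?v x"
    unfolding A_alpha_bethe_scaled_level_fun[OF x d] using eq by simp
qed

lemma bethe_eigenvalue_le:
  assumes d: "d \<ge> 1" and \<alpha>: "0 \<le> \<alpha>" "\<alpha> \<le> 1"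
    and ev: "is_eigenvalue (bethe_verts d k) (A_alpha \<alpha> (bethe_verts d k) (bethe_adj d k)) \<mu>"
  shows "\<mu> \<le> \<alpha> * (real d + 1) + 2 * (1 - \<alpha>) * sqrt (real d) * cos (pi / real (k + 1))"
proof -
  define \<phi> where "\<phi> = pi / real (Suc k)"
  define S where "S i = sin ((real i + 1) * \<phi>)" for i
  define c where "c = \<alpha> * (real d + 1) + 2 * (1 - \<alpha>) * sqrt (real d) * cos \<phi>"
  have s: "sqrt (real d) > 0" using d by simp
  have S_pos: "S i > 0" if "i < k" for i
  proof -
    have "0 < (real i + 1) * \<phi>" unfolding \<phi>_def by simp
    moreover have "(real i + 1) * \<phi> < pi" unfolding \<phi>_def using that by (simp add: field_simps)
    ultimately show ?thesis unfolding S_def by (rule sin_gt_zero)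
  qed
  have "\<mu> \<le> c"
  proof (rule eigenvalue_le_of_pos_supersolution[OF finite_bethe_verts _ _ _ ev])
    show "\<forall>x\<in>bethe_verts d k. \<forall>y\<in>bethe_verts d k. 0 \<le> A_alpha \<alpha> (bethe_verts d k) (bethe_adj d k) x y"
      using \<alpha> unfolding A_alpha_def deg_mat_def Defs.adj_mat_def by auto
    show "\<forall>x\<in>bethe_verts d k. 0 < S (length x) / sqrt (real d) ^ length x"
      using S_pos s unfolding bethe_verts_def by auto
    show "\<forall>x\<in>bethe_verts d k. (\<Sum>y\<in>bethe_verts d k. A_alpha \<alpha> (bethe_verts d k) (bethe_adj d k) x y
            * (S (length y) / sqrt (real d) ^ length y)) \<le> c * (S (length x) / sqrt (real d) ^ length x)"
    proof
      fix x assume x: "x \<in> bethe_verts d k"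
      define i where "i = length x"
      have i: "i < k" using x unfolding bethe_verts_def i_def by auto
      have "\<alpha> * bethe_level_deg d k i \<le> \<alpha> * (real d + 1)"
        using \<alpha> unfolding bethe_level_deg_def by (intro mult_left_mono) auto
      hence "\<alpha> * bethe_level_deg d k i + 2 * ((1 - \<alpha>) * sqrt (real d)) * cos \<phi> \<le> c"
        unfolding c_def by (simp add: algebra_simps)
      hence "(\<alpha> * bethe_level_deg d k i + 2 * ((1 - \<alpha>) * sqrt (real d)) * cos \<phi>) * S i \<le> c * S i"
        using S_pos[OF i] by (intro mult_right_mono) auto
      hence "tridiag_apply (\<lambda>i. \<alpha> * bethe_level_deg d k i) ((1 - \<alpha>) * sqrt (real d)) k S i \<le> c * S i"
        unfolding S_def \<phi>_def tridiag_apply_sin[OF i] .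
      thus "(\<Sum>y\<in>bethe_verts d k. A_alpha \<alpha> (bethe_verts d k) (bethe_adj d k) x y
            * (S (length y) / sqrt (real d) ^ length y)) \<le> c * (S (length x) / sqrt (real d) ^ length x)"
        unfolding A_alpha_bethe_scaled_level_fun[OF x d] i_def[symmetric]
        using s by (simp add: divide_right_mono)
    qed
  qed
  thus ?thesis unfolding c_def \<phi>_def by simp
qed

lemma bethe_tridiag_form_sin:
  assumes k: "k \<ge> 2"
  defines "t \<equiv> \<lambda>i. sin ((real i + 1) * (pi / real k))"
  shows "tridiag_form (\<lambda>i. \<alpha> * bethe_level_deg d k i) ((1 - \<alpha>) * sqrt d) k \<mu> t
       = real k / 2 * (\<mu> - (\<alpha> * (real d + 1) + 2 * (1 - \<alpha>) * sqrt d * cos (pi / real k)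
                           - 2 * \<alpha> * sin (pi / real k) ^ 2 / real k))"
proof -
  have deg_t: "bethe_level_deg d k i * t i ^ 2 = (real d + 1) * t i ^ 2 - (if i = 0 then t i ^ 2 else 0)"
    if i: "i < k" for i
  proof (cases "0 < i \<and> Suc i = k")
    case True
    hence "(real i + 1) * (pi / real k) = pi" by (auto simp: field_simps)
    thus ?thesis using True unfolding t_def by simp
  qed (use i k in \<open>auto simp: bethe_level_deg_def algebra_simps\<close>)
  have sq: "(\<Sum>i<k. t i ^ 2) = real k / 2" unfolding t_def by (rule sum_sin_squared[OF k])
  have "(\<Sum>i<k. bethe_level_deg d k i * t i ^ 2) = (\<Sum>i<k. (real d + 1) * t i ^ 2 - (if i = 0 then t i ^ 2 else 0))"
    using deg_t by (intro sum.cong) auto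
  also have "\<dots> = (real d + 1) * (\<Sum>i<k. t i ^ 2) - (\<Sum>i<k. if i = 0 then t i ^ 2 else 0)"
    by (simp add: sum_subtractf sum_distrib_left)
  also have "\<dots> = (real d + 1) * (real k / 2) - sin (pi / real k) ^ 2"
    using k sq by (simp add: t_def)
  finally have deg_sum: "(\<Sum>i<k. bethe_level_deg d k i * t i ^ 2) = \<dots>" .
  have "(\<Sum>i<k. (\<mu> - \<alpha> * bethe_level_deg d k i) * t i ^ 2)
      = \<mu> * (\<Sum>i<k. t i ^ 2) - \<alpha> * (\<Sum>i<k. bethe_level_deg d k i * t i ^ 2)"
    by (simp add: sum_subtractf sum_distrib_left algebra_simps)
  also have "\<dots> = \<mu> * (real k / 2) - \<alpha> * ((real d + 1) * (real k / 2) - sin (pi / real k) ^ 2)"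
    by (simp only: deg_sum sq)
  finally have diag: "(\<Sum>i<k. (\<mu> - \<alpha> * bethe_level_deg d k i) * t i ^ 2) = \<dots>" .
  have off_diag: "2 * (\<Sum>i<k - 1. t i * t (Suc i)) = real k * cos (pi / real k)"
    unfolding t_def by (rule sum_sin_times_sin_Suc[OF k])
  have "tridiag_form (\<lambda>i. \<alpha> * bethe_level_deg d k i) ((1 - \<alpha>) * sqrt d) k \<mu> t
      = (\<Sum>i<k. (\<mu> - \<alpha> * bethe_level_deg d k i) * t i ^ 2) - (1 - \<alpha>) * sqrt d * (2 * (\<Sum>i<k - 1. t i * t (Suc i)))"
    unfolding tridiag_form_def by simp
  also have "\<dots> = \<mu> * (real k / 2) - \<alpha> * ((real d + 1) * (real k / 2) - sin (pi / real k) ^ 2)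
      - (1 - \<alpha>) * sqrt d * (real k * cos (pi / real k))"
    unfolding diag off_diag ..
  also have "\<dots> = real k / 2 * (\<mu> - (\<alpha> * (real d + 1) + 2 * (1 - \<alpha>) * sqrt d * cos (pi / real k)
                           - 2 * \<alpha> * sin (pi / real k) ^ 2 / real k))"
    using k by (simp add: field_simps)
  finally show ?thesis .
qed

lemma bethe_eigenvalue_exists_ge_rayleigh:
  assumes d: "d \<ge> 1" and k: "k \<ge> 2" and \<alpha>: "\<alpha> < 1"
  shows "\<exists>\<theta>. is_eigenvalue (bethe_verts d k) (A_alpha \<alpha> (bethe_verts d k) (bethe_adj d k)) \<theta>
      \<and> \<theta> \<ge> \<alpha> * (real d + 1) + 2 * (1 - \<alpha>) * sqrt d * cos (pi / real k) - 2 * \<alpha> * sin (pi / real k) ^ 2 / real k"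
    (is "\<exists>\<theta>. _ \<and> \<theta> \<ge> ?R")
proof -
  define a where "a i = \<alpha> * bethe_level_deg d k i" for i
  define b where "b = (1 - \<alpha>) * sqrt d"
  have b: "b > 0" unfolding b_def using \<alpha> d by simp
  define t where "t i = sin ((real i + 1) * (pi / real k))" for i
  have "t 0 > 0" unfolding t_def using k by (intro sin_gt_zero) (auto simp: field_simps)
  hence "\<exists>i<k. t i \<noteq> 0" using k by (intro exI[of _ 0]) auto
  moreover have "tridiag_form a b k ?R t \<le> 0"
    unfolding a_def b_def t_def bethe_tridiag_form_sin[OF k] by simp
  ultimately obtain \<theta> where \<theta>: "\<theta> \<ge> ?R" "tridiag_seq a b (Suc k) \<theta> = 0"
    using tridiag_seq_root_ge_of_form_nonpos[OF b] by blast
  have "is_eigenvalue (bethe_verts d k) (A_alpha \<alpha> (bethe_verts d k) (bethe_adj d k)) \<theta>"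
  proof (rule bethe_eigenvalue_of_tridiag[OF d])
    show "\<exists>i<k. tridiag_seq a b (Suc i) \<theta> \<noteq> 0" using k by (intro exI[of _ 0]) auto
    show "tridiag_apply (\<lambda>i. \<alpha> * bethe_level_deg d k i) ((1 - \<alpha>) * sqrt d) k (\<lambda>i. tridiag_seq a b (Suc i) \<theta>) i
        = \<theta> * tridiag_seq a b (Suc i) \<theta>" if "i < k" for i
      using tridiag_seq_eigenvector[OF _ \<theta>(2) that] b unfolding a_def b_def by fastforce
  qed
  thus ?thesis using \<theta>(1) by blast
qed

lemma bethe_adjacency_eigenvalue:
  assumes d: "d \<ge> 1" and k: "k \<ge> 1"
  shows "is_eigenvalue (bethe_verts d k) (A_alpha 0 (bethe_verts d k) (bethe_adj d k))
           (2 * sqrt d * cos (pi / real (k + 1)))"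
proof (rule bethe_eigenvalue_of_tridiag[OF d, where T = "\<lambda>i. sin ((real i + 1) * (pi / real (Suc k)))"])
  have "sin ((real 0 + 1) * (pi / real (Suc k))) > 0" using k by (intro sin_gt_zero) (auto simp: field_simps)
  thus "\<exists>i<k. sin ((real i + 1) * (pi / real (Suc k))) \<noteq> 0" using k by (intro exI[of _ 0]) auto
  show "tridiag_apply (\<lambda>i. 0 * bethe_level_deg d k i) ((1 - 0) * sqrt d) k (\<lambda>i. sin ((real i + 1) * (pi / real (Suc k)))) i
      = 2 * sqrt d * cos (pi / real (k + 1)) * sin ((real i + 1) * (pi / real (Suc k)))" if "i < k" for i
    using tridiag_apply_sin[OF that, of "\<lambda>_. 0" "sqrt d"] by simp
qed

lemma bethe_degree_eigenvalue:
  assumes d: "d \<ge> 1" and j: "j < k"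
  shows "is_eigenvalue (bethe_verts d k) (A_alpha 1 (bethe_verts d k) (bethe_adj d k)) (bethe_level_deg d k j)"
  by (rule bethe_eigenvalue_of_tridiag[OF d, where T = "\<lambda>i. if i = j then 1 else 0"])
     (use j in \<open>auto simp: tridiag_apply_def\<close>)

lemma bethe_eigenvalue_exists_gt:
  assumes d: "d \<ge> 1" and k: "k \<ge> 2" and \<alpha>: "0 \<le> \<alpha>" "\<alpha> \<le> 1"
  shows "\<exists>\<theta>. is_eigenvalue (bethe_verts d k) (A_alpha \<alpha> (bethe_verts d k) (bethe_adj d k)) \<theta>
      \<and> \<theta> > \<alpha> * (real d + 1) + 2 * (1 - \<alpha>) * sqrt (real d) * cos (pi / real k)
             - 20 * \<alpha> * sqrt (real d) / real k ^ 3"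
    (is "\<exists>\<theta>. ?ev \<theta> \<and> \<theta> > ?L")
proof -
  have s: "sqrt (real d) \<ge> 1" using d by simp
  have k0: "real k > 0" using k by simp
  consider "\<alpha> = 0" | "\<alpha> = 1" | "0 < \<alpha>" "\<alpha> < 1" using \<alpha> by linarith
  thus ?thesis
  proof cases
    case 1
    have "cos (pi / real k) < cos (pi / real (k + 1))"
      using k k0 by (subst cos_mono_less_eq) (auto simp: field_simps)
    thus ?thesis using 1 s bethe_adjacency_eigenvalue[OF d] k by (intro exI[of _ "2 * sqrt d * cos (pi / real (k + 1))"]) simp
  next
    case 2
    define j where "j = (if k = 2 then 0 else 1 :: nat)"
    have "bethe_level_deg d k j > ?L"
    proof (cases "k = 2")
      case True
      thus ?thesis using 2 s unfolding j_def bethe_level_deg_def by (simp; linarith)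
    next
      case False
      have "20 * sqrt (real d) / real k ^ 3 > 0" using s k0 by simp
      thus ?thesis using 2 k False unfolding j_def bethe_level_deg_def by simp
    qed
    moreover have "j < k" using k unfolding j_def by simp
    ultimately show ?thesis using bethe_degree_eigenvalue[OF d] 2 by blast
  next
    case 3
    obtain \<theta> where \<theta>: "?ev \<theta>"
      "\<theta> \<ge> \<alpha> * (real d + 1) + 2 * (1 - \<alpha>) * sqrt d * cos (pi / real k) - 2 * \<alpha> * sin (pi / real k) ^ 2 / real k"
      using bethe_eigenvalue_exists_ge_rayleigh[OF d k 3(2)] by blast
    have "2 * \<alpha> * sin (pi / real k) ^ 2 / real k < 2 * \<alpha> * (10 / real k ^ 2) / real k"
      using sin_pi_div_squared_lt[of k] k k0 3 by (intro divide_strict_right_mono mult_strict_left_mono) auto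
    also have "\<dots> \<le> 20 * \<alpha> * sqrt (real d) / real k ^ 3"
      using s 3 k0 by (simp add: field_simps power3_eq_cube power2_eq_square)
    finally show ?thesis using \<theta> by (intro exI[of _ \<theta>]) simp
  qed
qed

theorem mainTheorem13:
  fixes d k :: nat and \<alpha> :: real
  assumes "d \<ge> 1" and "k \<ge> 2" and "0 \<le> \<alpha>" and "\<alpha> \<le> 1"
  shows "largest_eigenvalue (bethe_verts d k) (A_alpha \<alpha> (bethe_verts d k) (bethe_adj d k))
           \<le> \<alpha> * (real d + 1) + 2 * (1 - \<alpha>) * sqrt (real d) * cos (pi / real (k + 1))
       \<and> largest_eigenvalue (bethe_verts d k) (A_alpha \<alpha> (bethe_verts d k) (bethe_adj d k))
           > \<alpha> * (real d + 1) + 2 * (1 - \<alpha>) * sqrt (real d) * cos (pi / real k)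
             - 20 * \<alpha> * sqrt (real d) / real k ^ 3"
proof -
  obtain \<theta> where "is_eigenvalue (bethe_verts d k) (A_alpha \<alpha> (bethe_verts d k) (bethe_adj d k)) \<theta>"
    and "\<theta> > \<alpha> * (real d + 1) + 2 * (1 - \<alpha>) * sqrt (real d) * cos (pi / real k)
             - 20 * \<alpha> * sqrt (real d) / real k ^ 3"
    using bethe_eigenvalue_exists_gt[OF assms] by blast
  with assms show ?thesis
    by (intro largest_eigenvalue_bounds[OF finite_bethe_verts] bethe_eigenvalue_le)
qed

end
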